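(* Let $G$ be a graph with $G = G_1\square G_2$ for graphs $G_1,G_2$. Then $G$ is regular $K_3$-regular if and only if both $G_1$ and $G_2$ are regular $K_3$-regular.
   Context: All graphs are finite, simple and undirected. The $K_3$-degree of a vertex $v$ is the number of triangles containing $v$. A graph is regular $K_3$-regular if all its vertices have the same degree and all its vertices have the same $K_3$-degree. The Cartesian product $G_1\square G_2$ has vertex set $V(G_1)\times V(G_2)$, with $(u,v)$ and $(u',v')$ adjacent iff either $u=u'$ and $vv'\in E(G_2)$, or $v=v'$ and $uu'\in E(G_1)$. *)

theory Defs
  imports Main
begin

definition simple_graph :: "'a set \<Rightarrow> ('a \<times> 'a) set \<Rightarrow> bool" where
  "simple_graph V E \<longleftrightarrow> finite V \<and> V \<noteq> {} \<and> E \<subseteq> V \<times> V \<and> sym E \<and> irrefl E"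

definition degree :: "'a set \<Rightarrow> ('a \<times> 'a) set \<Rightarrow> 'a \<Rightarrow> nat" where
  "degree V E v = card {u \<in> V. (v, u) \<in> E}"

text \<open>Number of triangles containing v: a triangle containing v is
{v,u,w} with u,w adjacent neighbours of v; counted via the pair {u,w}.\<close>

definition k3_degree :: "'a set \<Rightarrow> ('a \<times> 'a) set \<Rightarrow> 'a \<Rightarrow> nat" where
  "k3_degree V E v = card {{u, w} | u w. u \<in> V \<and> w \<in> V \<and> (v, u) \<in> E \<and> (v, w) \<in> E \<and> (u, w) \<in> E}"

definition regular_K3_regular :: "'a set \<Rightarrow> ('a \<times> 'a) set \<Rightarrow> bool" where
  "regular_K3_regular V E \<longleftrightarrow>
     (\<exists>d t. \<forall>v \<in> V. degree V E v = d \<and> k3_degree V E v = t)"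

definition cart_prod_vertices :: "'a set \<Rightarrow> 'b set \<Rightarrow> ('a \<times> 'b) set" where
  "cart_prod_vertices V1 V2 = V1 \<times> V2"

definition cart_prod_edges ::
  "'a set \<Rightarrow> ('a \<times> 'a) set \<Rightarrow> 'b set \<Rightarrow> ('b \<times> 'b) set \<Rightarrow> (('a \<times> 'b) \<times> ('a \<times> 'b)) set" where
  "cart_prod_edges V1 E1 V2 E2 =
     {((u, v), (u', v')). u \<in> V1 \<and> u' \<in> V1 \<and> v \<in> V2 \<and> v' \<in> V2 \<and>
        ((u = u' \<and> (v, v') \<in> E2) \<or> (v = v' \<and> (u, u') \<in> E1))}"

end

theory Submission
  imports Defs
begin

text \<open>The neighbourhood of \<open>(u, v)\<close> in \<open>G\<^sub>1 \<box> G\<^sub>2\<close> is the disjoint union of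
\<open>N\<^sub>1(u) \<times> {v}\<close> and \<open>{u} \<times> N\<^sub>2(v)\<close>. Two neighbours taken from different parts differ in
both coordinates and so are not adjacent; hence every triangle through \<open>(u, v)\<close> lies in
the copy of \<open>G\<^sub>1\<close> or in the copy of \<open>G\<^sub>2\<close> through \<open>(u, v)\<close>. Thus both the degree and the
\<open>K\<^sub>3\<close>-degree of \<open>(u, v)\<close> are the sums of those of \<open>u\<close> and \<open>v\<close>, and a sum \<open>f u + g v\<close> is
constant on \<open>V\<^sub>1 \<times> V\<^sub>2\<close> iff \<open>f\<close> and \<open>g\<close> are constant, because \<open>V\<^sub>1\<close> and \<open>V\<^sub>2\<close> are
nonempty.\<close>

definition neighbours :: "'a set \<Rightarrow> ('a \<times> 'a) set \<Rightarrow> 'a \<Rightarrow> 'a set" where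
  "neighbours V E v = {u \<in> V. (v, u) \<in> E}"

definition link_edges :: "'a set \<Rightarrow> ('a \<times> 'a) set \<Rightarrow> 'a \<Rightarrow> 'a set set" where
  "link_edges V E v =
     {{u, w} | u w. u \<in> V \<and> w \<in> V \<and> (v, u) \<in> E \<and> (v, w) \<in> E \<and> (u, w) \<in> E}"

lemma degree_eq_card_neighbours: "degree V E v = card (neighbours V E v)"
  by (simp add: degree_def neighbours_def)

lemma k3_degree_eq_card_link_edges: "k3_degree V E v = card (link_edges V E v)"
  by (simp add: k3_degree_def link_edges_def)

lemma finite_link_edges: "finite V \<Longrightarrow> finite (link_edges V E v)"
  by (rule finite_subset[of _ "Pow V"]) (auto simp: link_edges_def)

lemma regular_K3_regular_iff:
  "regular_K3_regular V E \<longleftrightarrow>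
     (\<exists>d. \<forall>v \<in> V. degree V E v = d) \<and> (\<exists>t. \<forall>v \<in> V. k3_degree V E v = t)"
  by (auto simp: regular_K3_regular_def)

lemma sum_constant_on_Times_iff:
  fixes f :: "'a \<Rightarrow> 'c::cancel_ab_semigroup_add"
  assumes "A \<noteq> {}" and "B \<noteq> {}"
    and h: "\<And>a b. a \<in> A \<Longrightarrow> b \<in> B \<Longrightarrow> h (a, b) = f a + g b"
  shows "(\<exists>c. \<forall>p \<in> A \<times> B. h p = c) \<longleftrightarrow> (\<exists>c. \<forall>a \<in> A. f a = c) \<and> (\<exists>c. \<forall>b \<in> B. g b = c)"
proof
  assume "\<exists>c. \<forall>p \<in> A \<times> B. h p = c"
  then obtain c where c: "\<And>a b. a \<in> A \<Longrightarrow> b \<in> B \<Longrightarrow> f a + g b = c"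
    using h by fastforce
  obtain a0 b0 where "a0 \<in> A" "b0 \<in> B"
    using assms(1,2) by blast
  then have "\<forall>a \<in> A. f a = f a0" and "\<forall>b \<in> B. g b = g b0"
    using c by (metis add_right_cancel, metis add_left_cancel)
  then show "(\<exists>c. \<forall>a \<in> A. f a = c) \<and> (\<exists>c. \<forall>b \<in> B. g b = c)"
    by blast
next
  assume "(\<exists>c. \<forall>a \<in> A. f a = c) \<and> (\<exists>c. \<forall>b \<in> B. g b = c)"
  then show "\<exists>c. \<forall>p \<in> A \<times> B. h p = c"
    using h by fastforce
qed

context
  fixes V1 :: "'a set" and E1 :: "('a \<times> 'a) set"
    and V2 :: "'b set" and E2 :: "('b \<times> 'b) set"
    and u :: 'a and v :: 'b
  assumes u: "u \<in> V1" and v: "v \<in> V2"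
begin

lemma neighbours_cart_prod:
  "neighbours (cart_prod_vertices V1 V2) (cart_prod_edges V1 E1 V2 E2) (u, v)
     = neighbours V1 E1 u \<times> {v} \<union> {u} \<times> neighbours V2 E2 v"
  using u v by (auto simp: neighbours_def cart_prod_vertices_def cart_prod_edges_def)

lemma degree_cart_prod:
  assumes "finite V1" and "finite V2" and "irrefl E1"
  shows "degree (cart_prod_vertices V1 V2) (cart_prod_edges V1 E1 V2 E2) (u, v)
     = degree V1 E1 u + degree V2 E2 v"
proof -
  have "neighbours V1 E1 u \<times> {v} \<inter> {u} \<times> neighbours V2 E2 v = {}"
    using \<open>irrefl E1\<close> by (auto simp: neighbours_def irrefl_def)
  moreover have "finite (neighbours V1 E1 u)" and "finite (neighbours V2 E2 v)"
    using assms(1,2) by (simp_all add: neighbours_def)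
  ultimately show ?thesis
    by (simp add: degree_eq_card_neighbours neighbours_cart_prod card_Un_disjoint
        card_cartesian_product)
qed

lemma link_edges_cart_prod:
  assumes "irrefl E1" and "irrefl E2"
  shows "link_edges (cart_prod_vertices V1 V2) (cart_prod_edges V1 E1 V2 E2) (u, v)
     = (\<lambda>S. S \<times> {v}) ` link_edges V1 E1 u \<union> (\<lambda>S. {u} \<times> S) ` link_edges V2 E2 v"
    (is "?L = ?A \<union> ?B")
proof
  show "?L \<subseteq> ?A \<union> ?B"
  proof
    fix X assume "X \<in> ?L"
    then obtain a b c d where X: "X = {(a, b), (c, d)}"
      and in_V: "a \<in> V1" "b \<in> V2" "c \<in> V1" "d \<in> V2"
      and edges: "((u, v), (a, b)) \<in> cart_prod_edges V1 E1 V2 E2"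
        "((u, v), (c, d)) \<in> cart_prod_edges V1 E1 V2 E2"
        "((a, b), (c, d)) \<in> cart_prod_edges V1 E1 V2 E2"
      by (auto simp: link_edges_def cart_prod_vertices_def)
    have "(x, x) \<notin> E1" "(y, y) \<notin> E2" for x y
      using assms by (auto simp: irrefl_def)
    then consider "b = v" "d = v" "(u, a) \<in> E1" "(u, c) \<in> E1" "(a, c) \<in> E1"
      | "a = u" "c = u" "(v, b) \<in> E2" "(v, d) \<in> E2" "(b, d) \<in> E2"
      using edges unfolding cart_prod_edges_def by auto
    then show "X \<in> ?A \<union> ?B"
    proof cases
      case 1
      then have "{a, c} \<in> link_edges V1 E1 u" and "X = {a, c} \<times> {v}"
        using X in_V by (auto simp: link_edges_def)
      then show ?thesis by blast
    next
      case 2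
      then have "{b, d} \<in> link_edges V2 E2 v" and "X = {u} \<times> {b, d}"
        using X in_V by (auto simp: link_edges_def)
      then show ?thesis by blast
    qed
  qed
next
  show "?A \<union> ?B \<subseteq> ?L"
    using u v by (fastforce simp: link_edges_def cart_prod_vertices_def cart_prod_edges_def)
qed

lemma k3_degree_cart_prod:
  assumes "finite V1" and "finite V2" and "irrefl E1" and "irrefl E2"
  shows "k3_degree (cart_prod_vertices V1 V2) (cart_prod_edges V1 E1 V2 E2) (u, v)
     = k3_degree V1 E1 u + k3_degree V2 E2 v"
proof -
  let ?A = "(\<lambda>S. S \<times> {v}) ` link_edges V1 E1 u"
  let ?B = "(\<lambda>S. {u} \<times> S) ` link_edges V2 E2 v"
  have "?A \<inter> ?B = {}"
    using \<open>irrefl E1\<close> by (fastforce simp: link_edges_def irrefl_def)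
  moreover have "card ?A = k3_degree V1 E1 u" and "card ?B = k3_degree V2 E2 v"
    by (auto simp: k3_degree_eq_card_link_edges intro!: card_image inj_onI)
  ultimately show ?thesis
    using assms by (simp add: k3_degree_eq_card_link_edges link_edges_cart_prod
        card_Un_disjoint finite_link_edges)
qed

end

theorem theorem4p2:
  fixes V1 :: "'a set" and E1 :: "('a \<times> 'a) set"
    and V2 :: "'b set" and E2 :: "('b \<times> 'b) set"
  assumes "simple_graph V1 E1" and "simple_graph V2 E2"
  shows "regular_K3_regular (cart_prod_vertices V1 V2) (cart_prod_edges V1 E1 V2 E2)
         \<longleftrightarrow> regular_K3_regular V1 E1 \<and> regular_K3_regular V2 E2"
proof -
  let ?V = "cart_prod_vertices V1 V2" and ?E = "cart_prod_edges V1 E1 V2 E2"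
  have graphs: "finite V1" "finite V2" "irrefl E1" "irrefl E2" "V1 \<noteq> {}" "V2 \<noteq> {}"
    using assms by (simp_all add: simple_graph_def)
  have "(\<exists>d. \<forall>p \<in> V1 \<times> V2. degree ?V ?E p = d)
      \<longleftrightarrow> (\<exists>d. \<forall>a \<in> V1. degree V1 E1 a = d) \<and> (\<exists>d. \<forall>b \<in> V2. degree V2 E2 b = d)"
    using graphs by (intro sum_constant_on_Times_iff degree_cart_prod) simp_all
  moreover have "(\<exists>t. \<forall>p \<in> V1 \<times> V2. k3_degree ?V ?E p = t)
      \<longleftrightarrow> (\<exists>t. \<forall>a \<in> V1. k3_degree V1 E1 a = t) \<and> (\<exists>t. \<forall>b \<in> V2. k3_degree V2 E2 b = t)"
    using graphs by (intro sum_constant_on_Times_iff k3_degree_cart_prod) simp_all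
  ultimately show ?thesis
    unfolding regular_K3_regular_iff cart_prod_vertices_def by blast
qed

end
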